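(* Let $R$ be an axis-parallel rectangle of height $h$, $\rho>0$, and $t=\lceil h/(\sqrt3\rho)\rceil$. For every vertical line $\lambda$ there is a set of $2t$ points such that for every axis-parallel line segment $\ell\subset R$ whose hippodrome $H(\ell,\rho)$ intersects $\lambda$, at least one of these points lies in $H(\ell,\rho)$.
   Context: The hippodrome $H(\ell,\rho)$ of a segment $\ell$ is the set of points of the plane at Euclidean distance at most $\rho$ from some point of $\ell$. *)

theory Defs
  imports "HOL-Analysis.Analysis"
begin

text \<open>Points of the plane are pairs of reals; the metric on real \<times> real is Euclidean.\<close>

definition hippodrome :: "(real \<times> real) set \<Rightarrow> real \<Rightarrow> (real \<times> real) set" where
  "hippodrome l \<rho> = {p. \<exists>q\<in>l. dist p q \<le> \<rho>}"

definition axis_parallel_segment :: "(real \<times> real) set \<Rightarrow> bool" where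
  "axis_parallel_segment l \<longleftrightarrow>
     (\<exists>p q. l = closed_segment p q \<and> (fst p = fst q \<or> snd p = snd q))"

definition vertical_line :: "real \<Rightarrow> (real \<times> real) set" where
  "vertical_line x0 = {p. fst p = x0}"

end

theory Submission
  imports Defs
begin

(* Split the height range [c, d] into t intervals of length u = h / t, where
   t = \<lceil>h / (\<surd>3 \<rho>)\<rceil> guarantees u \<le> \<surd>3 \<rho>.  Place one point at the midpoint height of every
   interval on each of the two vertical lines x = x0 \<plusminus> \<rho>/2; this gives 2t points.
   Every point q with |fst q - x0| \<le> \<rho> and c \<le> snd q \<le> d is then within horizontal
   distance \<rho>/2 and vertical distance u/2 \<le> (\<surd>3/2) \<rho> of one of them, hence within
   Euclidean distance \<rho>, since (\<rho>/2)\<^sup>2 + (3/4) \<rho>\<^sup>2 = \<rho>\<^sup>2.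
   If the hippodrome of a segment l inside the rectangle meets the vertical line, some
   point q of l is such a point, and the grid point near q lies in the hippodrome.
   (This argument does not even need l to be axis-parallel.)
   The file first proves the one-dimensional covering of an interval by t midpoints,
   then the planar distance estimate, then the covering of the strip, and finally the
   theorem. *)

lemma unit_interval_index:
  fixes r :: real and t :: nat
  assumes "0 \<le> r" "r \<le> real t" "t > 0"
  shows "\<exists>k<t. real k \<le> r \<and> r \<le> real k + 1"
proof (cases "r < real t")
  case True
  define k where "k = nat \<lfloor>r\<rfloor>"
  have "real k = of_int \<lfloor>r\<rfloor>" using assms(1) by (simp add: k_def)
  moreover have "k < t" using True assms(1) unfolding k_def
    by (metis floor_less_iff nat_less_iff of_int_of_nat_eq zero_le_floor)
  moreover have "of_int \<lfloor>r\<rfloor> \<le> r" "r \<le> of_int \<lfloor>r\<rfloor> + 1"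
    using floor_correct[of r] by linarith+
  ultimately show ?thesis by auto
next
  case False
  then have "r = real t" using assms by simp
  then show ?thesis using assms by (intro exI[of _ "t - 1"]) auto
qed

lemma interval_midpoint_cover:
  fixes c u y :: real and t :: nat
  assumes "u > 0" "t > 0" "c \<le> y" "y \<le> c + real t * u"
  shows "\<exists>k<t. \<bar>y - (c + (real k + 1/2) * u)\<bar> \<le> u / 2"
proof -
  define r where "r = (y - c) / u"
  have "0 \<le> r" "r \<le> real t"
    using assms unfolding r_def by (simp_all add: divide_le_eq mult.commute)
  then obtain k where k: "k < t" "real k \<le> r" "r \<le> real k + 1"
    using unit_interval_index assms(2) by blast
  have "real k * u \<le> y - c" "y - c \<le> real k * u + u"
    using k(2,3) assms(1) unfolding r_def by (simp_all add: field_simps)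
  moreover have "(real k + 1/2) * u = real k * u + u / 2" by (simp add: algebra_simps)
  ultimately have "\<bar>y - (c + (real k + 1/2) * u)\<bar> \<le> u / 2"
    unfolding abs_le_iff by linarith
  then show ?thesis using k(1) by blast
qed

lemma interval_length_bound:
  fixes h s :: real and t :: nat
  assumes "s > 0" "t > 0" "h / s \<le> real t"
  shows "h / real t \<le> s"
  using assms by (simp add: divide_le_eq mult.commute pos_divide_le_eq)

lemma dist_le_from_coordinates:
  fixes p q :: "real \<times> real" and \<alpha> \<beta> \<rho> :: real
  assumes "\<bar>fst p - fst q\<bar> \<le> \<alpha>" "\<bar>snd p - snd q\<bar> \<le> \<beta>"
    and "\<alpha>\<^sup>2 + \<beta>\<^sup>2 \<le> \<rho>\<^sup>2" "\<rho> \<ge> 0"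
  shows "dist p q \<le> \<rho>"
proof -
  have "(dist (fst p) (fst q))\<^sup>2 \<le> \<alpha>\<^sup>2" "(dist (snd p) (snd q))\<^sup>2 \<le> \<beta>\<^sup>2"
    using assms(1,2) by (metis abs_ge_zero dist_real_def power2_abs power_mono)+
  then have "(dist (fst p) (fst q))\<^sup>2 + (dist (snd p) (snd q))\<^sup>2 \<le> \<rho>\<^sup>2"
    using assms(3) by linarith
  then have "sqrt ((dist (fst p) (fst q))\<^sup>2 + (dist (snd p) (snd q))\<^sup>2) \<le> \<rho>"
    using assms(4) by (simp add: real_le_lsqrt)
  then show ?thesis by (metis dist_Pair_Pair prod.collapse)
qed

definition grid_points :: "real \<Rightarrow> real \<Rightarrow> real \<Rightarrow> real \<Rightarrow> nat \<Rightarrow> (real \<times> real) set" where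
  "grid_points x0 \<rho> c u t =
     (\<Union>x\<in>{x0 - \<rho>/2, x0 + \<rho>/2}. (\<lambda>k. (x, c + (real k + 1/2) * u)) ` {..<t})"

lemma grid_points_finite: "finite (grid_points x0 \<rho> c u t)"
  by (simp add: grid_points_def)

lemma card_grid_points:
  fixes x0 \<rho> c u :: real and t :: nat
  assumes "\<rho> > 0" "u > 0"
  shows "card (grid_points x0 \<rho> c u t) = 2 * t"
proof -
  define col :: "real \<Rightarrow> (real \<times> real) set"
    where "col x = (\<lambda>k. (x, c + (real k + 1/2) * u)) ` {..<t}" for x
  have inj: "inj_on (\<lambda>k. (x, c + (real k + 1/2) * u)) {..<t}" for x :: real
    using assms(2) by (auto simp: inj_on_def)
  have card_col: "card (col x) = t" for x
    unfolding col_def using card_image[OF inj] by simp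
  have "col (x0 - \<rho>/2) \<inter> col (x0 + \<rho>/2) = {}"
    using assms(1) unfolding col_def by auto
  then have "card (col (x0 - \<rho>/2) \<union> col (x0 + \<rho>/2)) = t + t"
    using card_Un_disjoint[of "col (x0 - \<rho>/2)" "col (x0 + \<rho>/2)"] card_col
    by (simp add: col_def)
  moreover have "grid_points x0 \<rho> c u t = col (x0 - \<rho>/2) \<union> col (x0 + \<rho>/2)"
    by (auto simp: grid_points_def col_def)
  ultimately show ?thesis by simp
qed

lemma grid_points_cover_strip:
  fixes q :: "real \<times> real"
  assumes "\<rho> > 0" "u > 0" "t > 0" "u \<le> sqrt 3 * \<rho>"
    and "\<bar>fst q - x0\<bar> \<le> \<rho>" "c \<le> snd q" "snd q \<le> c + real t * u"
  shows "\<exists>p\<in>grid_points x0 \<rho> c u t. dist p q \<le> \<rho>"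
proof -
  obtain k where k: "k < t" "\<bar>snd q - (c + (real k + 1/2) * u)\<bar> \<le> u / 2"
    using interval_midpoint_cover assms(2,3,6,7) by blast
  obtain x where x: "x \<in> {x0 - \<rho>/2, x0 + \<rho>/2}" "\<bar>x - fst q\<bar> \<le> \<rho>/2"
  proof (cases "fst q \<le> x0")
    case True
    then have "\<bar>(x0 - \<rho>/2) - fst q\<bar> \<le> \<rho>/2" using assms(5) unfolding abs_le_iff by linarith
    then show ?thesis using that[of "x0 - \<rho>/2"] by simp
  next
    case False
    then have "\<bar>(x0 + \<rho>/2) - fst q\<bar> \<le> \<rho>/2" using assms(5) unfolding abs_le_iff by linarith
    then show ?thesis using that[of "x0 + \<rho>/2"] by simp
  qed
  define p where "p = (x, c + (real k + 1/2) * u)"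
  have "p \<in> grid_points x0 \<rho> c u t"
    using x(1) k(1) unfolding p_def grid_points_def by blast
  moreover have "(u/2)\<^sup>2 \<le> 3/4 * \<rho>\<^sup>2"
  proof -
    have "u\<^sup>2 \<le> (sqrt 3 * \<rho>)\<^sup>2" using assms(2,4) by (simp add: power_mono)
    then show ?thesis by (simp add: power_divide power_mult_distrib)
  qed
  then have "(\<rho>/2)\<^sup>2 + (u/2)\<^sup>2 \<le> \<rho>\<^sup>2" by (simp add: power_divide)
  then have "dist p q \<le> \<rho>"
    using x(2) k(2) assms(1) unfolding p_def
    by (intro dist_le_from_coordinates[of _ _ "\<rho>/2" "u/2"]) (auto simp: abs_minus_commute)
  ultimately show ?thesis by blast
qed

lemma hippodrome_meets_vertical_line:
  assumes "hippodrome l \<rho> \<inter> vertical_line x0 \<noteq> {}"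
  shows "\<exists>q\<in>l. \<bar>fst q - x0\<bar> \<le> \<rho>"
proof -
  obtain z q where z: "fst z = x0" and q: "q \<in> l" and dz: "dist z q \<le> \<rho>"
    using assms unfolding hippodrome_def vertical_line_def by blast
  have "\<bar>fst q - x0\<bar> = dist (fst z) (fst q)" using z by (simp add: dist_real_def)
  also have "\<dots> \<le> dist z q" by (rule dist_fst_le)
  also have "\<dots> \<le> \<rho>" by (rule dz)
  finally show ?thesis using q by blast
qed

theorem lemma4:
  fixes a b c d \<rho> x0 :: real
  assumes "a \<le> b" and "c < d" and "\<rho> > 0"
  defines "h \<equiv> d - c"
  defines "t \<equiv> nat \<lceil>h / (sqrt 3 * \<rho>)\<rceil>"
  shows "\<exists>P :: (real \<times> real) set. finite P \<and> card P = 2 * t \<and>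
           (\<forall>l. axis_parallel_segment l \<and> l \<subseteq> {a..b} \<times> {c..d} \<and>
                hippodrome l \<rho> \<inter> vertical_line x0 \<noteq> {}
                \<longrightarrow> P \<inter> hippodrome l \<rho> \<noteq> {})"
proof -
  have h_pos: "h > 0" and s_pos: "sqrt 3 * \<rho> > 0" using assms(2,3) h_def by simp_all
  have t_ge: "h / (sqrt 3 * \<rho>) \<le> real t"
    unfolding t_def using le_of_int_ceiling[of "h / (sqrt 3 * \<rho>)"] by linarith
  then have t_pos: "t > 0" using h_pos s_pos
    by (metis divide_pos_pos not_gr_zero not_less of_nat_0)
  define u where "u = h / real t"
  have u_pos: "u > 0" using h_pos t_pos by (simp add: u_def)
  have u_le: "u \<le> sqrt 3 * \<rho>" using interval_length_bound[OF s_pos t_pos t_ge] by (simp add: u_def)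
  have top: "c + real t * u = d" using t_pos by (simp add: u_def h_def)
  let ?P = "grid_points x0 \<rho> c u t"
  have hits: "?P \<inter> hippodrome l \<rho> \<noteq> {}"
    if l_in_R: "l \<subseteq> {a..b} \<times> {c..d}"
      and l_meets: "hippodrome l \<rho> \<inter> vertical_line x0 \<noteq> {}" for l
  proof -
    obtain q where q: "q \<in> l" "\<bar>fst q - x0\<bar> \<le> \<rho>"
      using hippodrome_meets_vertical_line[OF l_meets] by blast
    have "c \<le> snd q" "snd q \<le> c + real t * u" using q(1) l_in_R top by auto
    then obtain p where "p \<in> ?P" "dist p q \<le> \<rho>"
      using grid_points_cover_strip[OF assms(3) u_pos t_pos u_le q(2)] by blast
    then show ?thesis using q(1) unfolding hippodrome_def by blast
  qed
  show ?thesis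
  proof (intro exI[of _ ?P] conjI allI impI)
    show "finite ?P" by (rule grid_points_finite)
    show "card ?P = 2 * t" using card_grid_points[OF assms(3) u_pos] .
  next
    fix l
    assume "axis_parallel_segment l \<and> l \<subseteq> {a..b} \<times> {c..d} \<and>
            hippodrome l \<rho> \<inter> vertical_line x0 \<noteq> {}"
    then show "?P \<inter> hippodrome l \<rho> \<noteq> {}" using hits by blast
  qed
qed

end
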